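(* Consider either the FMM or the MMM with a mutant fitness distribution $\mu$ satisfying $G(x)>0$ for all $x>0$, and $\beta\in(0,1)$. For $t\in\mathbb N_0$ let $W_t$ be the fitness of the fittest of all mutants produced in generation $t$ (in the FMM this includes the mutants that die instantly), with $W_t=0$ if there is no mutant in generation $t$. Then almost surely on the event of survival the sequence $(W_t)_{t\ge0}$ is unbounded.
   Context: Models: Fix a probability distribution $\mu$ on $(0,\infty)$ and $\beta\in(0,1)$. The population evolves in discrete generations $t=0,1,2,\dots$; generation $0$ consists of a single individual with fitness $f>0$. Each individual of generation $t$ independently produces a Poisson distributed number of offspring whose mean equals its fitness. Each offspring independently, with probability $1-\beta$, inherits its parent's fitness and joins generation $t+1$; otherwise (probability $\beta$) it is a mutant. In the fittest mutant model (FMM), every mutant gets an independent fitness sampled from $\mu$, and only the fittest mutant of generation $t+1$ (if any mutant exists) is added to generation $t+1$; all other mutants die instantly. In the multiple mutant model (MMM), every mutant gets an independent fitness sampled from $\mu$ and all mutants are added to generation $t+1$. $X(t)$ is the number of individuals in generation $t$; survival is the event $\{X(t)\neq0 \text{ for all } t\}$. Write $G(x):=\mu((x,\infty))$. *)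

theory Defs
  imports "HOL-Probability.Probability"
begin

text \<open>
  Explicit construction of the FMM and MMM from independent primitive randomness.
  Individual number n of generation t (positions in a list) uses
    xi (Off t n)    : uniform on (0,1), converted to a Poisson(fitness) number of offspring
                      by inverse transform sampling;
    xi (Mut t n j)  : uniform on (0,1); the j-th offspring is a mutant iff xi (Mut t n j) < beta;
    xi (Fit t n j)  : distributed according to mu; the fitness the j-th offspring gets if mutant.
  All xi i are independent.  Since the positions of generation t+1 are determined by
  randomness of generations \<le> t, this yields exactly the laws of the models.
\<close>

datatype src = Off nat nat | Mut nat nat nat | Fit nat nat nat

datatype model = FMM | MMM

definition poisson_cdf :: "real \<Rightarrow> nat \<Rightarrow> real" where
  "poisson_cdf r n = (\<Sum>k\<le>n. r ^ k / fact k * exp (- r))"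

definition poisson_quantile :: "real \<Rightarrow> real \<Rightarrow> nat" where
  "poisson_quantile r u = (LEAST n. u \<le> poisson_cdf r n)"

definition n_off :: "(src \<Rightarrow> real) \<Rightarrow> nat \<Rightarrow> nat \<Rightarrow> real \<Rightarrow> nat" where
  "n_off w t n x = poisson_quantile x (w (Off t n))"

definition clones_of :: "real \<Rightarrow> (src \<Rightarrow> real) \<Rightarrow> nat \<Rightarrow> nat \<Rightarrow> real \<Rightarrow> real list" where
  "clones_of \<beta> w t n x = map (\<lambda>j. x) (filter (\<lambda>j. \<not> w (Mut t n j) < \<beta>) [0..<n_off w t n x])"

definition mutants_of :: "real \<Rightarrow> (src \<Rightarrow> real) \<Rightarrow> nat \<Rightarrow> nat \<Rightarrow> real \<Rightarrow> real list" where
  "mutants_of \<beta> w t n x = map (\<lambda>j. w (Fit t n j)) (filter (\<lambda>j. w (Mut t n j) < \<beta>) [0..<n_off w t n x])"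

definition all_clones :: "real \<Rightarrow> (src \<Rightarrow> real) \<Rightarrow> nat \<Rightarrow> real list \<Rightarrow> real list" where
  "all_clones \<beta> w t xs = concat (map (\<lambda>n. clones_of \<beta> w t n (xs ! n)) [0..<length xs])"

definition all_mutants :: "real \<Rightarrow> (src \<Rightarrow> real) \<Rightarrow> nat \<Rightarrow> real list \<Rightarrow> real list" where
  "all_mutants \<beta> w t xs = concat (map (\<lambda>n. mutants_of \<beta> w t n (xs ! n)) [0..<length xs])"

definition next_gen :: "model \<Rightarrow> real \<Rightarrow> (src \<Rightarrow> real) \<Rightarrow> nat \<Rightarrow> real list \<Rightarrow> real list" where
  "next_gen m \<beta> w t xs =
     (let ms = all_mutants \<beta> w t xs in
      all_clones \<beta> w t xs @
        (case m of MMM \<Rightarrow> ms | FMM \<Rightarrow> (if ms = [] then [] else [Max (set ms)])))"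

text \<open>Generation t as a list of fitnesses (X(t) = length of this list); generation 0 is [f].\<close>
primrec gen :: "model \<Rightarrow> real \<Rightarrow> real \<Rightarrow> (src \<Rightarrow> real) \<Rightarrow> nat \<Rightarrow> real list" where
  "gen m \<beta> f w 0 = [f]"
| "gen m \<beta> f w (Suc t) = next_gen m \<beta> w t (gen m \<beta> f w t)"

definition fittest_mutant :: "model \<Rightarrow> real \<Rightarrow> real \<Rightarrow> (src \<Rightarrow> real) \<Rightarrow> nat \<Rightarrow> real" where
  "fittest_mutant m \<beta> f w t =
     (let ms = all_mutants \<beta> w t (gen m \<beta> f w t) in if ms = [] then 0 else Max (set ms))"

definition survives :: "model \<Rightarrow> real \<Rightarrow> real \<Rightarrow> (src \<Rightarrow> real) \<Rightarrow> bool" where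
  "survives m \<beta> f w \<longleftrightarrow> (\<forall>t. gen m \<beta> f w t \<noteq> [])"

end

theory Submission
  imports Defs "HOL-Library.Countable"
begin

text \<open>Fix a level K and call a realisation K-bounded up to time t if generation t is nonempty
  and \<open>W\<^sub>s \<le> K\<close> for all \<open>s < t\<close>. On this event, some individual of generation t has offspring;
  the first such individual is determined by the randomness of the earlier generations and the
  offspring counts of generation t. Independently of that, its first child is a mutant of fitness
  above K with probability \<open>p = \<beta> G(K) > 0\<close>, and then \<open>W\<^sub>t > K\<close>. Hence K-boundedness up to
  time t+1 has at most \<open>1 - p\<close> times the probability of K-boundedness up to time t, so staying
  K-bounded forever is a null event; the union over \<open>K \<in> \<nat>\<close> of these null events contains
  survival with bounded \<open>(W\<^sub>t)\<close>.\<close>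

instance src :: countable by countable_datatype

fun src_time :: "src \<Rightarrow> nat" where
  "src_time (Off t n) = t" | "src_time (Mut t n j) = t" | "src_time (Fit t n j) = t"

subsection \<open>Dependence of the generations on the randomness\<close>

lemma next_gen_cong:
  assumes "\<And>i. src_time i = t \<Longrightarrow> w i = w' i"
  shows "next_gen m \<beta> w t xs = next_gen m \<beta> w' t xs"
  using assms by (simp add: next_gen_def all_clones_def all_mutants_def clones_of_def
      mutants_of_def n_off_def)

lemma gen_cong:
  "(\<And>i. src_time i < t \<Longrightarrow> w i = w' i) \<Longrightarrow> gen m \<beta> f w t = gen m \<beta> f w' t"
proof (induction t)
  case 0 then show ?case by simp
next
  case (Suc t)
  then have "gen m \<beta> f w t = gen m \<beta> f w' t" by auto
  with Suc.prems show ?case by (simp add: next_gen_cong[where w=w and w'=w'])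
qed

lemma all_mutants_cong:
  assumes "\<And>i. src_time i = t \<Longrightarrow> w i = w' i"
  shows "all_mutants \<beta> w t xs = all_mutants \<beta> w' t xs"
  using assms by (simp add: all_mutants_def mutants_of_def n_off_def)

lemma fittest_mutant_cong:
  "(\<And>i. src_time i \<le> t \<Longrightarrow> w i = w' i) \<Longrightarrow> fittest_mutant m \<beta> f w t = fittest_mutant m \<beta> f w' t"
  unfolding fittest_mutant_def
  using gen_cong[of t w w' m \<beta> f] all_mutants_cong[of t w w' \<beta>] by simp

subsection \<open>Generations as lists of countable labels\<close>

text \<open>A generation is a list of reals, which does not live in a countable space. For
  measurability we record instead where each individual's fitness comes from: \<open>None\<close> for the
  ancestor's fitness f, \<open>Some (Fit t n j)\<close> for a mutant.\<close>

definition label_fitness :: "real \<Rightarrow> (src \<Rightarrow> real) \<Rightarrow> src option \<Rightarrow> real" where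
  "label_fitness f w l = (case l of None \<Rightarrow> f | Some i \<Rightarrow> w i)"

definition clone_labels ::
    "real \<Rightarrow> real \<Rightarrow> (src \<Rightarrow> real) \<Rightarrow> nat \<Rightarrow> nat \<Rightarrow> src option \<Rightarrow> src option list" where
  "clone_labels \<beta> f w t n l =
     map (\<lambda>j. l) (filter (\<lambda>j. \<not> w (Mut t n j) < \<beta>) [0..<n_off w t n (label_fitness f w l)])"

definition mutant_labels ::
    "real \<Rightarrow> real \<Rightarrow> (src \<Rightarrow> real) \<Rightarrow> nat \<Rightarrow> nat \<Rightarrow> src option \<Rightarrow> src option list" where
  "mutant_labels \<beta> f w t n l =
     map (\<lambda>j. Some (Fit t n j)) (filter (\<lambda>j. w (Mut t n j) < \<beta>) [0..<n_off w t n (label_fitness f w l)])"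

definition all_clone_labels ::
    "real \<Rightarrow> real \<Rightarrow> (src \<Rightarrow> real) \<Rightarrow> nat \<Rightarrow> src option list \<Rightarrow> src option list" where
  "all_clone_labels \<beta> f w t L = concat (map (\<lambda>n. clone_labels \<beta> f w t n (L ! n)) [0..<length L])"

definition all_mutant_labels ::
    "real \<Rightarrow> real \<Rightarrow> (src \<Rightarrow> real) \<Rightarrow> nat \<Rightarrow> src option list \<Rightarrow> src option list" where
  "all_mutant_labels \<beta> f w t L = concat (map (\<lambda>n. mutant_labels \<beta> f w t n (L ! n)) [0..<length L])"

definition fittest_label :: "real \<Rightarrow> (src \<Rightarrow> real) \<Rightarrow> src option list \<Rightarrow> src option" where
  "fittest_label f w ms =
     hd (filter (\<lambda>l. label_fitness f w l = Max (set (map (label_fitness f w) ms))) ms)"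

definition next_gen_labels ::
    "model \<Rightarrow> real \<Rightarrow> real \<Rightarrow> (src \<Rightarrow> real) \<Rightarrow> nat \<Rightarrow> src option list \<Rightarrow> src option list" where
  "next_gen_labels m \<beta> f w t L =
     (let ms = all_mutant_labels \<beta> f w t L in
      all_clone_labels \<beta> f w t L @
        (case m of MMM \<Rightarrow> ms | FMM \<Rightarrow> (if ms = [] then [] else [fittest_label f w ms])))"

primrec gen_labels :: "model \<Rightarrow> real \<Rightarrow> real \<Rightarrow> (src \<Rightarrow> real) \<Rightarrow> nat \<Rightarrow> src option list" where
  "gen_labels m \<beta> f w 0 = [None]"
| "gen_labels m \<beta> f w (Suc t) = next_gen_labels m \<beta> f w t (gen_labels m \<beta> f w t)"

lemma map_label_fitness_all_mutant_labels:
  "map (label_fitness f w) (all_mutant_labels \<beta> f w t L) = all_mutants \<beta> w t (map (label_fitness f w) L)"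
  unfolding all_mutant_labels_def all_mutants_def mutant_labels_def mutants_of_def map_concat
  by (intro arg_cong[where f=concat] map_cong) (auto simp: label_fitness_def)

lemma map_label_fitness_all_clone_labels:
  "map (label_fitness f w) (all_clone_labels \<beta> f w t L) = all_clones \<beta> w t (map (label_fitness f w) L)"
  unfolding all_clone_labels_def all_clones_def clone_labels_def clones_of_def map_concat
  by (intro arg_cong[where f=concat] map_cong) auto

lemma label_fitness_fittest_label:
  assumes "ms \<noteq> []"
  shows "label_fitness f w (fittest_label f w ms) = Max (set (map (label_fitness f w) ms))"
proof -
  let ?P = "\<lambda>l. label_fitness f w l = Max (set (map (label_fitness f w) ms))"
  have "Max (set (map (label_fitness f w) ms)) \<in> set (map (label_fitness f w) ms)"
    using assms by (intro Max_in) auto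
  then have "filter ?P ms \<noteq> []" by (auto simp: filter_empty_conv)
  then have "hd (filter ?P ms) \<in> set (filter ?P ms)" by (rule hd_in_set)
  then show ?thesis unfolding fittest_label_def by simp
qed

lemma next_gen_map_label_fitness:
  "next_gen m \<beta> w t (map (label_fitness f w) L) = map (label_fitness f w) (next_gen_labels m \<beta> f w t L)"
  by (cases m) (auto simp: next_gen_def next_gen_labels_def Let_def label_fitness_fittest_label
      map_label_fitness_all_mutant_labels[symmetric] map_label_fitness_all_clone_labels[symmetric])

lemma gen_eq_map_label_fitness: "gen m \<beta> f w t = map (label_fitness f w) (gen_labels m \<beta> f w t)"
  by (induction t) (simp_all add: next_gen_map_label_fitness, simp add: label_fitness_def)

subsection \<open>Measurability\<close>

abbreviation randomness :: "(src \<Rightarrow> real) measure" where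
  "randomness \<equiv> PiM UNIV (\<lambda>_. borel)"

lemma measurable_countable_comp:
  fixes g :: "'b \<Rightarrow> 'c::countable"
  assumes "g \<in> measurable M (count_space UNIV)"
  shows "(\<lambda>x. h (g x)) \<in> measurable M (count_space UNIV)"
  using measurable_compose[OF assms, of h "count_space UNIV"] by simp

lemma measurable_countable_comp2:
  fixes g1 :: "'b \<Rightarrow> 'c::countable" and g2 :: "'b \<Rightarrow> 'd::countable"
  assumes "g1 \<in> measurable M (count_space UNIV)" and "g2 \<in> measurable M (count_space UNIV)"
  shows "(\<lambda>x. h (g1 x) (g2 x)) \<in> measurable M (count_space UNIV)"
  by (rule measurable_compose_countable[where f="\<lambda>a x. h a (g2 x)",
        OF measurable_countable_comp[OF assms(2)] assms(1)])

lemma measurable_filter: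
  fixes xs :: "'c::countable list"
  assumes "\<And>j. Measurable.pred M (\<lambda>x. P x j)"
  shows "(\<lambda>x. filter (P x) xs) \<in> measurable M (count_space UNIV)"
proof (induction xs)
  case Nil then show ?case by simp
next
  case (Cons a xs)
  have "(\<lambda>x. if P x a then a # filter (P x) xs else filter (P x) xs) \<in> measurable M (count_space UNIV)"
    using assms[of a] Cons measurable_countable_comp[OF Cons, of "\<lambda>l. a # l"] by measurable
  then show ?case by simp
qed

lemma measurable_filter_upt:
  assumes "N \<in> measurable M (count_space UNIV)" and "\<And>j. Measurable.pred M (\<lambda>x. P x j)"
  shows "(\<lambda>x. filter (P x) [0..<N x]) \<in> measurable M (count_space UNIV)"
  by (rule measurable_compose_countable[where f="\<lambda>k x. filter (P x) [0..<k]",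
        OF measurable_filter[OF assms(2)] assms(1)])

lemma measurable_concat_map:
  fixes F :: "'b \<Rightarrow> 'c \<Rightarrow> 'd::countable list"
  assumes "\<And>n. (\<lambda>x. F x n) \<in> measurable M (count_space UNIV)"
  shows "(\<lambda>x. concat (map (F x) xs)) \<in> measurable M (count_space UNIV)"
proof (induction xs)
  case Nil then show ?case by simp
next
  case (Cons a xs)
  show ?case using measurable_countable_comp2[OF assms[of a] Cons, of "(@)"] by simp
qed

lemma borel_measurable_Max_map:
  assumes "\<And>i. (\<lambda>x. g x i) \<in> borel_measurable M" and "ms \<noteq> []"
  shows "(\<lambda>x. Max (set (map (g x) ms)) :: real) \<in> borel_measurable M"
  using assms(2)
proof (induction ms)
  case Nil then show ?case by simp
next
  case (Cons a ms)
  show ?case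
  proof (cases "ms = []")
    case True then show ?thesis using assms(1) by simp
  next
    case False
    then have "(\<lambda>x. max (g x a) (Max (set (map (g x) ms)))) \<in> borel_measurable M"
      using Cons assms(1) by measurable
    then show ?thesis using False by (simp add: Max_insert)
  qed
qed

lemma borel_measurable_coordinate[measurable]: "(\<lambda>w. w i) \<in> borel_measurable randomness"
  by (rule measurable_component_singleton) simp

lemma borel_measurable_label_fitness[measurable]: "(\<lambda>w. label_fitness f w l) \<in> borel_measurable randomness"
  by (cases l) (simp_all add: label_fitness_def)

lemma borel_measurable_poisson_cdf[measurable]:
  assumes [measurable]: "g \<in> borel_measurable M"
  shows "(\<lambda>x. poisson_cdf (g x) k) \<in> borel_measurable M"
  unfolding poisson_cdf_def by measurable

lemma measurable_n_off:
  assumes [measurable]: "g \<in> borel_measurable randomness"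
  shows "(\<lambda>w. n_off w t n (g w)) \<in> measurable randomness (count_space UNIV)"
  unfolding n_off_def poisson_quantile_def
proof (rule measurable_Least)
  fix k
  show "Measurable.pred randomness (\<lambda>w. w (Off t n) \<le> poisson_cdf (g w) k)"
    unfolding pred_def by (rule borel_measurable_le) measurable
qed

lemma measurable_all_mutant_labels:
  "(\<lambda>w. all_mutant_labels \<beta> f w t L) \<in> measurable randomness (count_space UNIV)"
  unfolding all_mutant_labels_def mutant_labels_def
  by (intro measurable_concat_map measurable_countable_comp[where h="map _"]
      measurable_filter_upt measurable_n_off) measurable

lemma measurable_all_clone_labels:
  "(\<lambda>w. all_clone_labels \<beta> f w t L) \<in> measurable randomness (count_space UNIV)"
  unfolding all_clone_labels_def clone_labels_def
  by (intro measurable_concat_map measurable_countable_comp[where h="map _"]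
      measurable_filter_upt measurable_n_off) measurable

lemma measurable_fittest_label:
  assumes "ms \<noteq> []"
  shows "(\<lambda>w. fittest_label f w ms) \<in> measurable randomness (count_space UNIV)"
  unfolding fittest_label_def
proof (rule measurable_countable_comp[where h=hd], rule measurable_filter)
  fix j
  have [measurable]: "(\<lambda>w. Max (set (map (label_fitness f w) ms))) \<in> borel_measurable randomness"
    by (rule borel_measurable_Max_map[OF borel_measurable_label_fitness assms])
  show "Measurable.pred randomness (\<lambda>w. label_fitness f w j = Max (set (map (label_fitness f w) ms)))"
    unfolding pred_def by (rule borel_measurable_eq) measurable
qed

lemma measurable_next_gen_labels:
  "(\<lambda>w. next_gen_labels m \<beta> f w t L) \<in> measurable randomness (count_space UNIV)"
proof -
  have fittest: "(\<lambda>w. if ms = [] then [] else [fittest_label f w ms]) \<in> measurable randomness (count_space UNIV)"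
    for ms
    by (cases "ms = []") (auto intro!: measurable_countable_comp[OF measurable_fittest_label])
  have mutant_part: "(\<lambda>w. case m of MMM \<Rightarrow> all_mutant_labels \<beta> f w t L | FMM \<Rightarrow>
      (if all_mutant_labels \<beta> f w t L = [] then [] else [fittest_label f w (all_mutant_labels \<beta> f w t L)]))
      \<in> measurable randomness (count_space UNIV)"
  proof (cases m)
    case FMM
    then show ?thesis
      using measurable_compose_countable[where f="\<lambda>ms w. if ms = [] then [] else [fittest_label f w ms]",
          OF fittest measurable_all_mutant_labels] by simp
  qed (simp add: measurable_all_mutant_labels)
  show ?thesis unfolding next_gen_labels_def Let_def
    by (rule measurable_countable_comp2[OF measurable_all_clone_labels mutant_part, where h="(@)"])
qed

lemma measurable_gen_labels: "(\<lambda>w. gen_labels m \<beta> f w t) \<in> measurable randomness (count_space UNIV)"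
proof (induction t)
  case 0 then show ?case by simp
next
  case (Suc t)
  show ?case
    by (simp, rule measurable_compose_countable[where f="\<lambda>L w. next_gen_labels m \<beta> f w t L",
          OF measurable_next_gen_labels Suc])
qed

lemma borel_measurable_fittest_mutant: "(\<lambda>w. fittest_mutant m \<beta> f w t) \<in> borel_measurable randomness"
proof -
  have eq: "fittest_mutant m \<beta> f w t =
      (\<lambda>ms w. if ms = [] then 0 else Max (set (map (label_fitness f w) ms)))
      (all_mutant_labels \<beta> f w t (gen_labels m \<beta> f w t)) w" for w
    by (simp add: fittest_mutant_def gen_eq_map_label_fitness map_label_fitness_all_mutant_labels[symmetric])
  have "(\<lambda>w. all_mutant_labels \<beta> f w t (gen_labels m \<beta> f w t)) \<in> measurable randomness (count_space UNIV)"
    by (rule measurable_compose_countable[where f="\<lambda>L w. all_mutant_labels \<beta> f w t L",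
          OF measurable_all_mutant_labels measurable_gen_labels])
  then show ?thesis unfolding eq
  proof (rule measurable_compose_countable[rotated])
    fix ms :: "src option list"
    show "(\<lambda>w. if ms = [] then 0 else Max (set (map (label_fitness f w) ms))) \<in> borel_measurable randomness"
      by (cases "ms = []") (simp_all add: borel_measurable_Max_map[OF borel_measurable_label_fitness])
  qed
qed

subsection \<open>The events of the argument\<close>

definition alive_bounded :: "model \<Rightarrow> real \<Rightarrow> real \<Rightarrow> real \<Rightarrow> nat \<Rightarrow> (src \<Rightarrow> real) \<Rightarrow> bool" where
  "alive_bounded m \<beta> f K t w \<longleftrightarrow> gen m \<beta> f w t \<noteq> [] \<and> (\<forall>s<t. fittest_mutant m \<beta> f w s \<le> K)"

definition first_parent :: "model \<Rightarrow> real \<Rightarrow> real \<Rightarrow> real \<Rightarrow> nat \<Rightarrow> nat \<Rightarrow> (src \<Rightarrow> real) \<Rightarrow> bool" where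
  "first_parent m \<beta> f K t i w \<longleftrightarrow> alive_bounded m \<beta> f K t w \<and> i < length (gen m \<beta> f w t) \<and>
     (\<forall>n<i. n_off w t n (gen m \<beta> f w t ! n) = 0) \<and> n_off w t i (gen m \<beta> f w t ! i) \<noteq> 0"

definition first_child_fit_mutant :: "real \<Rightarrow> real \<Rightarrow> nat \<Rightarrow> nat \<Rightarrow> (src \<Rightarrow> real) \<Rightarrow> bool" where
  "first_child_fit_mutant \<beta> K t i w \<longleftrightarrow> w (Mut t i 0) < \<beta> \<and> K < w (Fit t i 0)"

lemma measurable_alive_bounded[measurable]: "Measurable.pred randomness (alive_bounded m \<beta> f K t)"
proof -
  have "Measurable.pred randomness (\<lambda>w. gen m \<beta> f w t \<noteq> [])"
    unfolding gen_eq_map_label_fitness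
    using measurable_countable_comp[OF measurable_gen_labels, of "\<lambda>L. L \<noteq> []"] by simp
  moreover have [measurable]: "(\<lambda>w. fittest_mutant m \<beta> f w s) \<in> borel_measurable randomness" for s
    by (rule borel_measurable_fittest_mutant)
  ultimately show ?thesis unfolding alive_bounded_def[abs_def] by measurable
qed

lemma measurable_first_parent[measurable]: "Measurable.pred randomness (first_parent m \<beta> f K t i)"
proof -
  define Q where "Q L w \<longleftrightarrow> i < length L \<and> (\<forall>n<i. n_off w t n (label_fitness f w (L ! n)) = 0) \<and>
      n_off w t i (label_fitness f w (L ! i)) \<noteq> 0" for L w
  have eq: "first_parent m \<beta> f K t i w \<longleftrightarrow> alive_bounded m \<beta> f K t w \<and> Q (gen_labels m \<beta> f w t) w" for w
    unfolding first_parent_def Q_def gen_eq_map_label_fitness by auto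
  have "Measurable.pred randomness (\<lambda>w. n_off w t n (label_fitness f w l) = 0)" for n l
    using measurable_countable_comp[OF measurable_n_off[OF borel_measurable_label_fitness], of "\<lambda>k. k = 0"]
    by simp
  then have "Measurable.pred randomness (Q L)" for L
    unfolding Q_def by measurable
  then have "Measurable.pred randomness (\<lambda>w. Q (gen_labels m \<beta> f w t) w)"
    by (rule measurable_compose_countable[OF _ measurable_gen_labels])
  then show ?thesis unfolding eq[abs_def] by measurable
qed

lemma measurable_first_child_fit_mutant[measurable]:
  "Measurable.pred randomness (first_child_fit_mutant \<beta> K t i)"
  unfolding first_child_fit_mutant_def[abs_def] by measurable

lemma first_parent_imp_alive_bounded: "first_parent m \<beta> f K t i w \<Longrightarrow> alive_bounded m \<beta> f K t w"
  by (simp add: first_parent_def)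

lemma first_parent_unique: "first_parent m \<beta> f K t i w \<Longrightarrow> first_parent m \<beta> f K t j w \<Longrightarrow> i = j"
  unfolding first_parent_def by (metis linorder_neqE_nat)

text \<open>If the first child of the first parent were a mutant of fitness above K, then \<open>W\<^sub>t > K\<close>.\<close>

lemma alive_bounded_Suc_first_parent:
  assumes "alive_bounded m \<beta> f K (Suc t) w"
  obtains i where "first_parent m \<beta> f K t i w" and "\<not> first_child_fit_mutant \<beta> K t i w"
proof -
  let ?xs = "gen m \<beta> f w t"
  have ne: "next_gen m \<beta> w t ?xs \<noteq> []" and bounded: "\<And>s. s \<le> t \<Longrightarrow> fittest_mutant m \<beta> f w s \<le> K"
    using assms by (auto simp: alive_bounded_def)
  have ex: "\<exists>n. n < length ?xs \<and> n_off w t n (?xs ! n) \<noteq> 0"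
  proof (rule ccontr)
    assume "\<not> ?thesis"
    then have "all_clones \<beta> w t ?xs = []" "all_mutants \<beta> w t ?xs = []"
      by (auto simp: all_clones_def all_mutants_def clones_of_def mutants_of_def)
    then have "next_gen m \<beta> w t ?xs = []" by (cases m) (simp_all add: next_gen_def)
    with ne show False by simp
  qed
  define i where "i = (LEAST n. n < length ?xs \<and> n_off w t n (?xs ! n) \<noteq> 0)"
  have i: "i < length ?xs" "n_off w t i (?xs ! i) \<noteq> 0"
    using LeastI_ex[OF ex] unfolding i_def by auto
  have "n_off w t n (?xs ! n) = 0" if "n < i" for n
    using not_less_Least[OF that[unfolded i_def]] that i by auto
  with i bounded have parent: "first_parent m \<beta> f K t i w"
    by (auto simp: first_parent_def alive_bounded_def)
  have "\<not> first_child_fit_mutant \<beta> K t i w"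
  proof
    assume fit: "first_child_fit_mutant \<beta> K t i w"
    then have "w (Fit t i 0) \<in> set (mutants_of \<beta> w t i (?xs ! i))"
      using i by (auto simp: first_child_fit_mutant_def mutants_of_def)
    then have "w (Fit t i 0) \<in> set (all_mutants \<beta> w t ?xs)"
      using i unfolding all_mutants_def by force
    then have "w (Fit t i 0) \<le> fittest_mutant m \<beta> f w t"
      unfolding fittest_mutant_def Let_def by (auto intro!: Max_ge)
    with bounded[of t] fit show False by (simp add: first_child_fit_mutant_def)
  qed
  with parent show thesis by (rule that)
qed

lemma alive_bounded_cong:
  "(\<And>i. src_time i < t \<Longrightarrow> w i = w' i) \<Longrightarrow> alive_bounded m \<beta> f K t w = alive_bounded m \<beta> f K t w'"
  unfolding alive_bounded_def using gen_cong[of t w w' m \<beta> f] fittest_mutant_cong[of _ w w' m \<beta> f]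
  by (metis (no_types, lifting) le_less_trans)

lemma first_parent_cong:
  assumes "\<And>i. src_time i < t \<or> i \<in> range (Off t) \<Longrightarrow> w i = w' i"
  shows "first_parent m \<beta> f K t j w = first_parent m \<beta> f K t j w'"
proof -
  have "gen m \<beta> f w t = gen m \<beta> f w' t" using assms by (intro gen_cong) auto
  moreover have "n_off w t n x = n_off w' t n x" for n x using assms by (simp add: n_off_def)
  ultimately show ?thesis unfolding first_parent_def using alive_bounded_cong[of t w w' m \<beta> f K] assms
    by auto
qed

subsection \<open>Probability estimates\<close>

lemma measurable_extend_zero:
  "(\<lambda>v i. if i \<in> A then v i else 0::real) \<in> measurable (PiM A (\<lambda>_. borel)) (PiM UNIV (\<lambda>_. borel))"
proof (rule measurable_PiM_single')
  fix i
  show "(\<lambda>v. if i \<in> A then v i else 0::real) \<in> borel_measurable (PiM A (\<lambda>_. borel))"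
    by (cases "i \<in> A") (simp_all add: measurable_component_singleton)
qed simp

context prob_space
begin

lemma prob_conj_eq_mult_disjoint_coordinates:
  fixes \<xi> :: "'i \<Rightarrow> 'a \<Rightarrow> real"
  assumes ind: "indep_vars (\<lambda>_. borel) \<xi> UNIV" and CD: "C \<inter> D = {}"
    and P: "Measurable.pred (PiM UNIV (\<lambda>_. borel)) P" and Q: "Measurable.pred (PiM UNIV (\<lambda>_. borel)) Q"
    and P_cong: "\<And>w w'. (\<And>i. i \<in> C \<Longrightarrow> w i = w' i) \<Longrightarrow> P w = P w'"
    and Q_cong: "\<And>w w'. (\<And>i. i \<in> D \<Longrightarrow> w i = w' i) \<Longrightarrow> Q w = Q w'"
  shows "prob {\<omega>\<in>space M. P (\<lambda>i. \<xi> i \<omega>) \<and> Q (\<lambda>i. \<xi> i \<omega>)} =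
         prob {\<omega>\<in>space M. P (\<lambda>i. \<xi> i \<omega>)} * prob {\<omega>\<in>space M. Q (\<lambda>i. \<xi> i \<omega>)}"
proof -
  define ext where "ext A v = (\<lambda>i. if i \<in> A then v i else 0::real)" for A :: "'i set" and v
  have ext: "ext A \<in> measurable (PiM A (\<lambda>_. borel)) (PiM UNIV (\<lambda>_. borel))" for A
    unfolding ext_def[abs_def] by (rule measurable_extend_zero)
  define PC where "PC = {v \<in> space (PiM C (\<lambda>_. borel)). P (ext C v)}"
  define QD where "QD = {v \<in> space (PiM D (\<lambda>_. borel)). Q (ext D v)}"
  have PC: "PC \<in> sets (PiM C (\<lambda>_. borel))"
    unfolding PC_def using measurable_compose[OF ext P] unfolding pred_def by simp
  have QD: "QD \<in> sets (PiM D (\<lambda>_. borel))"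
    unfolding QD_def using measurable_compose[OF ext Q] unfolding pred_def by simp
  have P_restrict: "P (ext C (restrict g C)) = P g" for g
    by (rule P_cong) (simp add: ext_def)
  have Q_restrict: "Q (ext D (restrict g D)) = Q g" for g
    by (rule Q_cong) (simp add: ext_def)
  have restrict_space: "restrict g A \<in> space (PiM A (\<lambda>_. borel::real measure))" for g A
    by (simp add: space_PiM)
  have eqs: "{\<omega>\<in>space M. P (\<lambda>i. \<xi> i \<omega>)} = (\<lambda>\<omega>. restrict (\<lambda>i. \<xi> i \<omega>) C) -` PC \<inter> space M"
    "{\<omega>\<in>space M. Q (\<lambda>i. \<xi> i \<omega>)} = (\<lambda>\<omega>. restrict (\<lambda>i. \<xi> i \<omega>) D) -` QD \<inter> space M"
    "{\<omega>\<in>space M. P (\<lambda>i. \<xi> i \<omega>) \<and> Q (\<lambda>i. \<xi> i \<omega>)} =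
       (\<lambda>x. (restrict (\<lambda>i. \<xi> i x) C, restrict (\<lambda>i. \<xi> i x) D)) -` (PC \<times> QD) \<inter> space M"
    unfolding PC_def QD_def using P_restrict Q_restrict restrict_space by auto
  show ?thesis unfolding eqs
    by (rule indep_varD[OF indep_var_restrict[OF ind CD] PC QD]) auto
qed

lemma prob_UN_inter_eq_mult:
  fixes E C :: "nat \<Rightarrow> 'a set"
  assumes "disjoint_family E" and "\<And>i. E i \<in> events" and "\<And>i. C i \<in> events"
    and "\<And>i. prob (E i \<inter> C i) = prob (E i) * q"
  shows "prob (\<Union>i. E i \<inter> C i) = prob (\<Union>i. E i) * q"
proof -
  have "disjoint_family (\<lambda>i. E i \<inter> C i)"
    using assms(1) unfolding disjoint_family_on_def by auto
  then have "(\<lambda>i. prob (E i \<inter> C i)) sums prob (\<Union>i. E i \<inter> C i)"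
    using assms(2,3) by (intro measure_UNION) (auto simp: emeasure_finite)
  moreover have "(\<lambda>i. prob (E i)) sums prob (\<Union>i. E i)"
    using assms(1,2) by (intro measure_UNION) (auto simp: emeasure_finite)
  then have "(\<lambda>i. prob (E i \<inter> C i)) sums (prob (\<Union>i. E i) * q)"
    unfolding assms(4) by (rule sums_mult2)
  ultimately show ?thesis by (rule sums_unique2)
qed

context
  fixes \<xi> :: "src \<Rightarrow> 'a \<Rightarrow> real" and \<mu> :: "real measure" and \<beta> :: real
  assumes indep: "indep_vars (\<lambda>_. borel) \<xi> UNIV"
    and d_mut: "\<And>t n j. distr M borel (\<xi> (Mut t n j)) = uniform_measure lborel {0<..<1}"
    and d_fit: "\<And>t n j. distr M borel (\<xi> (Fit t n j)) = \<mu>"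
    and beta: "0 \<le> \<beta>" "\<beta> \<le> 1"
begin

lemma random_variable_src: "random_variable borel (\<xi> i)"
  using indep by (simp add: indep_vars_def)

lemma prob_first_child_fit_mutant:
  "prob {\<omega>\<in>space M. first_child_fit_mutant \<beta> K t i (\<lambda>j. \<xi> j \<omega>)} = \<beta> * measure \<mu> {K<..}"
proof -
  define A where "A j = (if j = Mut t i 0 then {..<\<beta>} else {K<..})" for j
  have "{\<omega>\<in>space M. first_child_fit_mutant \<beta> K t i (\<lambda>j. \<xi> j \<omega>)} =
      (\<Inter>j\<in>{Mut t i 0, Fit t i 0}. \<xi> j -` A j \<inter> space M)"
    by (auto simp: A_def first_child_fit_mutant_def)
  also have "prob \<dots> = (\<Prod>j\<in>{Mut t i 0, Fit t i 0}. prob (\<xi> j -` A j \<inter> space M))"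
    by (rule indep_varsD[OF indep]) (auto simp: A_def)
  also have "\<dots> = measure (distr M borel (\<xi> (Mut t i 0))) {..<\<beta>} * measure (distr M borel (\<xi> (Fit t i 0))) {K<..}"
    by (simp add: A_def measure_distr random_variable_src)
  also have "measure (distr M borel (\<xi> (Mut t i 0))) {..<\<beta>} = \<beta>"
  proof -
    have "{0<..<1} \<inter> {..<\<beta>} = {0<..<\<beta>}" using beta by auto
    then show ?thesis unfolding d_mut using beta by (simp add: measure_uniform_measure)
  qed
  finally show ?thesis by (simp add: d_fit)
qed

lemma beta_mult_measure_le_1: "\<beta> * measure \<mu> {K<..} \<le> 1"
  unfolding prob_first_child_fit_mutant[of K 0 0, symmetric] by (rule prob_le_1)

lemma sets_Collect_randomness:
  assumes "Measurable.pred randomness P"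
  shows "{\<omega>\<in>space M. P (\<lambda>i. \<xi> i \<omega>)} \<in> events"
proof -
  have "(\<lambda>\<omega> i. \<xi> i \<omega>) \<in> measurable M randomness"
    by (rule measurable_PiM_single') (use random_variable_src in simp_all)
  from measurable_compose[OF this assms] show ?thesis unfolding pred_def by simp
qed

lemma prob_first_parent_first_child_not_fit_mutant:
  "prob {\<omega>\<in>space M. first_parent m \<beta> f K t i (\<lambda>j. \<xi> j \<omega>) \<and> \<not> first_child_fit_mutant \<beta> K t i (\<lambda>j. \<xi> j \<omega>)}
     = prob {\<omega>\<in>space M. first_parent m \<beta> f K t i (\<lambda>j. \<xi> j \<omega>)} * (1 - \<beta> * measure \<mu> {K<..})"
proof -
  have "prob {\<omega>\<in>space M. first_parent m \<beta> f K t i (\<lambda>j. \<xi> j \<omega>) \<and> \<not> first_child_fit_mutant \<beta> K t i (\<lambda>j. \<xi> j \<omega>)}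
      = prob {\<omega>\<in>space M. first_parent m \<beta> f K t i (\<lambda>j. \<xi> j \<omega>)} *
        prob {\<omega>\<in>space M. \<not> first_child_fit_mutant \<beta> K t i (\<lambda>j. \<xi> j \<omega>)}"
    \<comment> \<open>the first parent is fixed before the mutation and fitness draws of its first child\<close>
  proof (rule prob_conj_eq_mult_disjoint_coordinates[OF indep,
        where C="{i. src_time i < t} \<union> range (Off t)" and D="{Mut t i 0, Fit t i 0}"])
    show "Measurable.pred randomness (\<lambda>w. \<not> first_child_fit_mutant \<beta> K t i w)"
      by measurable
    show "first_parent m \<beta> f K t i w = first_parent m \<beta> f K t i w'"
      if "\<And>j. j \<in> {i. src_time i < t} \<union> range (Off t) \<Longrightarrow> w j = w' j" for w w'
      using that by (intro first_parent_cong) auto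
    show "(\<not> first_child_fit_mutant \<beta> K t i w) = (\<not> first_child_fit_mutant \<beta> K t i w')"
      if "\<And>j. j \<in> {Mut t i 0, Fit t i 0} \<Longrightarrow> w j = w' j" for w w'
      using that by (simp add: first_child_fit_mutant_def)
  qed auto
  also have "{\<omega>\<in>space M. \<not> first_child_fit_mutant \<beta> K t i (\<lambda>j. \<xi> j \<omega>)} =
      space M - {\<omega>\<in>space M. first_child_fit_mutant \<beta> K t i (\<lambda>j. \<xi> j \<omega>)}"
    by auto
  finally show ?thesis
    by (simp add: prob_compl sets_Collect_randomness prob_first_child_fit_mutant)
qed

lemma prob_alive_bounded_Suc_le:
  "prob {\<omega>\<in>space M. alive_bounded m \<beta> f K (Suc t) (\<lambda>i. \<xi> i \<omega>)}
     \<le> (1 - \<beta> * measure \<mu> {K<..}) * prob {\<omega>\<in>space M. alive_bounded m \<beta> f K t (\<lambda>i. \<xi> i \<omega>)}"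
proof -
  define E where "E i = {\<omega>\<in>space M. first_parent m \<beta> f K t i (\<lambda>i. \<xi> i \<omega>)}" for i
  define C where "C i = {\<omega>\<in>space M. \<not> first_child_fit_mutant \<beta> K t i (\<lambda>i. \<xi> i \<omega>)}" for i
  define q where "q = 1 - \<beta> * measure \<mu> {K<..}"
  have E: "E i \<in> events" for i
    unfolding E_def by (rule sets_Collect_randomness) measurable
  have C: "C i \<in> events" for i
    unfolding C_def by (rule sets_Collect_randomness[of "\<lambda>w. \<not> first_child_fit_mutant \<beta> K t i w"]) measurable
  have "prob (E i \<inter> C i) = prob (E i) * q" for i
  proof -
    have "prob (E i \<inter> C i) = prob {\<omega>\<in>space M. first_parent m \<beta> f K t i (\<lambda>j. \<xi> j \<omega>) \<and>
        \<not> first_child_fit_mutant \<beta> K t i (\<lambda>j. \<xi> j \<omega>)}"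
      by (rule arg_cong[where f=prob]) (auto simp: E_def C_def)
    also have "\<dots> = prob (E i) * q"
      unfolding E_def q_def by (rule prob_first_parent_first_child_not_fit_mutant)
    finally show ?thesis .
  qed
  then have UN_eq: "prob (\<Union>i. E i \<inter> C i) = prob (\<Union>i. E i) * q"
    using E C by (intro prob_UN_inter_eq_mult) (auto simp: disjoint_family_on_def E_def
        dest: first_parent_unique)
  have "{\<omega>\<in>space M. alive_bounded m \<beta> f K (Suc t) (\<lambda>i. \<xi> i \<omega>)} \<subseteq> (\<Union>i. E i \<inter> C i)"
    by (auto simp: E_def C_def elim: alive_bounded_Suc_first_parent)
  then have "prob {\<omega>\<in>space M. alive_bounded m \<beta> f K (Suc t) (\<lambda>i. \<xi> i \<omega>)} \<le> prob (\<Union>i. E i \<inter> C i)"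
    using E C by (intro finite_measure_mono) auto
  also have "\<dots> = prob (\<Union>i. E i) * q" by (rule UN_eq)
  also have "\<dots> \<le> prob {\<omega>\<in>space M. alive_bounded m \<beta> f K t (\<lambda>i. \<xi> i \<omega>)} * q"
  proof (rule mult_right_mono)
    show "prob (\<Union>i. E i) \<le> prob {\<omega>\<in>space M. alive_bounded m \<beta> f K t (\<lambda>i. \<xi> i \<omega>)}"
      by (intro finite_measure_mono)
        (auto simp: E_def sets_Collect_randomness first_parent_imp_alive_bounded)
    show "0 \<le> q" using beta_mult_measure_le_1 by (simp add: q_def)
  qed
  finally show ?thesis by (simp add: q_def mult.commute)
qed

lemma prob_alive_bounded_le_power:
  "prob {\<omega>\<in>space M. alive_bounded m \<beta> f K t (\<lambda>i. \<xi> i \<omega>)} \<le> (1 - \<beta> * measure \<mu> {K<..}) ^ t"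
proof (induction t)
  case 0 show ?case by simp
next
  case (Suc t)
  have "0 \<le> 1 - \<beta> * measure \<mu> {K<..}"
    using beta_mult_measure_le_1 by simp
  then have "(1 - \<beta> * measure \<mu> {K<..}) * prob {\<omega>\<in>space M. alive_bounded m \<beta> f K t (\<lambda>i. \<xi> i \<omega>)}
      \<le> (1 - \<beta> * measure \<mu> {K<..}) ^ Suc t"
    using Suc by (simp add: mult_left_mono)
  with prob_alive_bounded_Suc_le show ?case by (rule order_trans)
qed

lemma AE_not_always_alive_bounded:
  assumes "0 < \<beta> * measure \<mu> {K<..}"
  shows "AE \<omega> in M. \<not> (\<forall>t. alive_bounded m \<beta> f K t (\<lambda>i. \<xi> i \<omega>))"
proof -
  let ?A = "\<lambda>t. {\<omega>\<in>space M. alive_bounded m \<beta> f K t (\<lambda>i. \<xi> i \<omega>)}"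
  have A: "?A t \<in> events" for t
    by (rule sets_Collect_randomness) measurable
  have "prob (\<Inter>t. ?A t) \<le> (1 - \<beta> * measure \<mu> {K<..}) ^ t" for t
    using finite_measure_mono[of "\<Inter>t. ?A t" "?A t"] A prob_alive_bounded_le_power[of m f K t]
    by (auto intro: order_trans)
  moreover have "(\<lambda>t. (1 - \<beta> * measure \<mu> {K<..}) ^ t) \<longlonglongrightarrow> 0"
    using assms beta_mult_measure_le_1[of K] by (intro LIMSEQ_power_zero) simp
  ultimately have "prob (\<Inter>t. ?A t) \<le> 0" by (intro LIMSEQ_le_const) auto
  then have "(\<Inter>t. ?A t) \<in> null_sets M"
    using A by (auto simp: null_sets_def emeasure_eq_measure measure_le_0_iff)
  then show ?thesis by (rule AE_I') auto
qed

end

end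

theorem lemma1:
  fixes M :: "'a measure" and \<xi> :: "src \<Rightarrow> 'a \<Rightarrow> real"
    and \<mu> :: "real measure" and \<beta> f :: real and m :: model
  assumes M: "prob_space M"
    and mu_prob: "prob_space \<mu>" and mu_sets: "sets \<mu> = sets borel"
    and mu_pos: "measure \<mu> {0<..} = 1"
    and G_pos: "\<And>x. x > 0 \<Longrightarrow> measure \<mu> {x<..} > 0"
    and beta: "0 < \<beta>" "\<beta> < 1"
    and f: "f > 0"
    and indep: "prob_space.indep_vars M (\<lambda>_. borel) \<xi> UNIV"
    and d_off: "\<And>t n. distr M borel (\<xi> (Off t n)) = uniform_measure lborel {0<..<1}"
    and d_mut: "\<And>t n j. distr M borel (\<xi> (Mut t n j)) = uniform_measure lborel {0<..<1}"
    and d_fit: "\<And>t n j. distr M borel (\<xi> (Fit t n j)) = \<mu>"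
  shows "AE \<omega> in M. survives m \<beta> f (\<lambda>i. \<xi> i \<omega>) \<longrightarrow>
           \<not> bdd_above (range (\<lambda>t. fittest_mutant m \<beta> f (\<lambda>i. \<xi> i \<omega>) t))"
proof -
  \<comment> \<open>the law of the offspring counts, the value of f and the support of \<mu> play no role\<close>
  interpret prob_space M by (rule M)
  have "AE \<omega> in M. \<not> (\<forall>t. alive_bounded m \<beta> f (Suc K) t (\<lambda>i. \<xi> i \<omega>))" for K :: nat
    using beta G_pos[of "Suc K"]
    by (intro AE_not_always_alive_bounded[OF indep d_mut d_fit]) simp_all
  then have "AE \<omega> in M. \<forall>K::nat. \<not> (\<forall>t. alive_bounded m \<beta> f (Suc K) t (\<lambda>i. \<xi> i \<omega>))"
    by (simp add: AE_all_countable)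
  then show ?thesis
  proof (rule AE_mp, intro AE_I2 impI notI)
    fix \<omega> assume never: "\<forall>K::nat. \<not> (\<forall>t. alive_bounded m \<beta> f (Suc K) t (\<lambda>i. \<xi> i \<omega>))"
      and "survives m \<beta> f (\<lambda>i. \<xi> i \<omega>)"
      and "bdd_above (range (\<lambda>t. fittest_mutant m \<beta> f (\<lambda>i. \<xi> i \<omega>) t))"
    then obtain B where "\<And>t. fittest_mutant m \<beta> f (\<lambda>i. \<xi> i \<omega>) t \<le> B"
      and "\<And>t. gen m \<beta> f (\<lambda>i. \<xi> i \<omega>) t \<noteq> []"
      by (auto simp: bdd_above_def survives_def)
    moreover have "B \<le> Suc (nat \<lceil>B\<rceil>)" by linarith
    ultimately show False
      using never[rule_format, of "nat \<lceil>B\<rceil>"] by (auto simp: alive_bounded_def intro: order_trans)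
  qed
qed

end
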